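(* Assume that for every $\Phi\in\mathcal F_\Phi\setminus\mathcal I^*_\Phi$, \[ \max_{e,e'\in\mathcal{E}_{tr}} \sup_{u\in\mathcal{F}_{w}}|\mathbb{E}[ u\circ\Phi(\bm{x}^e)\,y^e]-\mathbb{E}[ u\circ\Phi(\bm{x}^{e'})\,y^{e'}]|>0 \ \text{ or }\ \max_{e,e'\in\mathcal{E}_{tr}}\sup_{u\in\mathcal{F}_{w}}|\mathbb{E}[\{ u\circ\Phi(\bm{x}^e)\}^2]-\mathbb{E}[\{ u\circ\Phi(\bm{x}^{e'})\}^2]|>0 . \] Then the feasible set of the FAIRM program (the set of $\Phi\in\mathcal F_\Phi$ satisfying the FAIRM constraints over $\mathcal E_{tr}$) equals $\mathcal I^*_\Phi$. If moreover $\mathcal I^*_\Phi\neq\emptyset$, then $w^{(\mathrm{FAIRM})}\circ\Phi^{(\mathrm{FAIRM})}=w^*\circ\Phi^*$.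
   Context: Let $\mathcal E_{all}$ be a finite set of environments and $\mathcal E_{tr}\subseteq\mathcal E_{all}$ the training environments; for each $e$, $(\bm x^e,y^e)\in\mathbb R^p\times\mathbb R$ has distribution $P^e$. Environment weights: $\alpha^*_e>0$ for $e\in\mathcal E_{all}$ (summing to one), and for training environments $\alpha_e=n_e/N_{tr}$ with $n_e$ the training sample size of $e$ and $N_{tr}=\sum_{e\in\mathcal E_{tr}}n_e$. $\mathcal F_\Phi$ is a class of representations $\Phi:\mathbb R^p\to\mathcal H$, $\mathcal F_w$ a class of functions $\mathcal H\to\mathbb R$. $\mathcal I^*_\Phi$ is the set of $\Phi\in\mathcal F_\Phi$ with $\max_{e,e'\in\mathcal E_{all}}\sup_{u\in\mathcal F_w}|\mathbb E[u\circ\Phi(\bm x^e)y^e]-\mathbb E[u\circ\Phi(\bm x^{e'})y^{e'}]|=0$ and $\max_{e,e'\in\mathcal E_{all}}\sup_{u\in\mathcal F_w}|\mathbb E[\{u\circ\Phi(\bm x^e)\}^2]-\mathbb E[\{u\circ\Phi(\bm x^{e'})\}^2]|=0$. Full-info FAIRM: $(w^*,\Phi^* )\in\arg\min_{w\in\mathcal F_w,\Phi\in\mathcal I^*_\Phi}\sum_{e\in\mathcal E_{all}}\alpha^*_e\mathbb E[(y^e-w\circ\Phi(\bm x^e))^2]$. FAIRM: $(w^{(\mathrm{FAIRM})},\Phi^{(\mathrm{FAIRM})})\in\arg\min_{w\in\mathcal F_w,\Phi\in\mathcal F_\Phi}\sum_{e\in\mathcal E_{tr}}\alpha_e\mathbb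 E[(y^e-w\circ\Phi(\bm x^e))^2]$ subject to $\max_{e,e'\in\mathcal E_{tr}}\sup_{u\in\mathcal F_w}|\mathbb E[u\circ\Phi(\bm x^e)y^e]-\mathbb E[u\circ\Phi(\bm x^{e'})y^{e'}]|=0$ and $\max_{e,e'\in\mathcal E_{tr}}\sup_{u\in\mathcal F_w}|\mathbb E[\{u\circ\Phi(\bm x^e)\}^2]-\mathbb E[\{u\circ\Phi(\bm x^{e'})\}^2]|=0$. *)

theory Defs
  imports "HOL-Probability.Probability"
begin

text \<open>Environments have an abstract type 'e; the data (x^e, y^e) of environment e
  has distribution P e on R^p x R (x ranges over real^'p).\<close>

definition cross_mom :: "('e \<Rightarrow> ((real^'p) \<times> real) measure) \<Rightarrow> (real^'p \<Rightarrow> 'h) \<Rightarrow> ('h \<Rightarrow> real) \<Rightarrow> 'e \<Rightarrow> real" where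
  "cross_mom P Phi u e = (\<integral>z. u (Phi (fst z)) * snd z \<partial>(P e))"

definition sq_mom :: "('e \<Rightarrow> ((real^'p) \<times> real) measure) \<Rightarrow> (real^'p \<Rightarrow> 'h) \<Rightarrow> ('h \<Rightarrow> real) \<Rightarrow> 'e \<Rightarrow> real" where
  "sq_mom P Phi u e = (\<integral>z. (u (Phi (fst z)))\<^sup>2 \<partial>(P e))"

definition disc_cross :: "('e \<Rightarrow> ((real^'p) \<times> real) measure) \<Rightarrow> ('h \<Rightarrow> real) set \<Rightarrow> 'e set \<Rightarrow> (real^'p \<Rightarrow> 'h) \<Rightarrow> ereal" where
  "disc_cross P Fw E Phi =
     Max ((\<lambda>(e, e'). SUP u\<in>Fw. ereal \<bar>cross_mom P Phi u e - cross_mom P Phi u e'\<bar>) ` (E \<times> E))"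

definition disc_sq :: "('e \<Rightarrow> ((real^'p) \<times> real) measure) \<Rightarrow> ('h \<Rightarrow> real) set \<Rightarrow> 'e set \<Rightarrow> (real^'p \<Rightarrow> 'h) \<Rightarrow> ereal" where
  "disc_sq P Fw E Phi =
     Max ((\<lambda>(e, e'). SUP u\<in>Fw. ereal \<bar>sq_mom P Phi u e - sq_mom P Phi u e'\<bar>) ` (E \<times> E))"

text \<open>Representations in FPhi satisfying the invariance constraints over the environments E.
  With E = E_all this is I*_Phi; with E = E_tr it is the FAIRM feasible set.\<close>
definition inv_set :: "('e \<Rightarrow> ((real^'p) \<times> real) measure) \<Rightarrow> ('h \<Rightarrow> real) set \<Rightarrow> (real^'p \<Rightarrow> 'h) set \<Rightarrow> 'e set \<Rightarrow> (real^'p \<Rightarrow> 'h) set" where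
  "inv_set P Fw FPhi E = {Phi \<in> FPhi. disc_cross P Fw E Phi = 0 \<and> disc_sq P Fw E Phi = 0}"

definition risk :: "('e \<Rightarrow> ((real^'p) \<times> real) measure) \<Rightarrow> 'e \<Rightarrow> (real^'p \<Rightarrow> real) \<Rightarrow> real" where
  "risk P e f = (\<integral>z. (snd z - f (fst z))\<^sup>2 \<partial>(P e))"

definition wargmin :: "('e \<Rightarrow> ((real^'p) \<times> real) measure) \<Rightarrow> ('h \<Rightarrow> real) set \<Rightarrow> (real^'p \<Rightarrow> 'h) set \<Rightarrow> 'e set \<Rightarrow> ('e \<Rightarrow> real) \<Rightarrow> (('h \<Rightarrow> real) \<times> (real^'p \<Rightarrow> 'h)) set" where
  "wargmin P Fw Feas E a =
     {(w, Phi). w \<in> Fw \<and> Phi \<in> Feas \<and>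
        (\<forall>w'\<in>Fw. \<forall>Phi'\<in>Feas.
           (\<Sum>e\<in>E. a e * risk P e (w \<circ> Phi)) \<le> (\<Sum>e\<in>E. a e * risk P e (w' \<circ> Phi')))}"

definition train_weight :: "('e \<Rightarrow> nat) \<Rightarrow> 'e set \<Rightarrow> 'e \<Rightarrow> real" where
  "train_weight n Etr e = real (n e) / real (\<Sum>e'\<in>Etr. n e')"

end

theory Submission
  imports Defs
begin

text \<open>On the feasible set the risk in environment e is E[(y^e)^2] - 2 E[w(Phi x) y] + E[w(Phi x)^2],
  and the invariance constraints make the last two moments independent of e.  Hence, once the
  training constraints carve out exactly the fully invariant representations, the training
  objective and the full-information objective differ by a constant on the common feasible set
  (both weight families sum to one), so they have the same minimisers.\<close>

definition sup_gap :: "('u \<Rightarrow> 'e \<Rightarrow> real) \<Rightarrow> 'u set \<Rightarrow> 'e set \<Rightarrow> ereal" where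
  "sup_gap f U E = Max ((\<lambda>(e, e'). SUP u\<in>U. ereal \<bar>f u e - f u e'\<bar>) ` (E \<times> E))"

lemma disc_cross_eq_sup_gap: "disc_cross P Fw E Phi = sup_gap (cross_mom P Phi) Fw E"
  unfolding disc_cross_def sup_gap_def ..

lemma disc_sq_eq_sup_gap: "disc_sq P Fw E Phi = sup_gap (sq_mom P Phi) Fw E"
  unfolding disc_sq_def sup_gap_def ..

lemma sup_gap_eq_0_iff:
  assumes "finite E" "E \<noteq> {}" "U \<noteq> {}"
  shows "sup_gap f U E = 0 \<longleftrightarrow> (\<forall>u\<in>U. \<forall>e\<in>E. \<forall>e'\<in>E. f u e = f u e')"
proof
  assume gap: "sup_gap f U E = 0"
  show "\<forall>u\<in>U. \<forall>e\<in>E. \<forall>e'\<in>E. f u e = f u e'"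
  proof (intro ballI)
    fix u e e' assume "u \<in> U" "e \<in> E" "e' \<in> E"
    then have "ereal \<bar>f u e - f u e'\<bar> \<le> (SUP u\<in>U. ereal \<bar>f u e - f u e'\<bar>)"
      by (intro SUP_upper)
    also have "\<dots> \<le> sup_gap f U E"
      unfolding sup_gap_def using \<open>finite E\<close> \<open>e \<in> E\<close> \<open>e' \<in> E\<close> by (intro Max_ge) auto
    finally show "f u e = f u e'"
      using gap by simp
  qed
next
  assume invariant: "\<forall>u\<in>U. \<forall>e\<in>E. \<forall>e'\<in>E. f u e = f u e'"
  have "(SUP u\<in>U. ereal \<bar>f u e - f u e'\<bar>) = 0" if "e \<in> E" "e' \<in> E" for e e'
  proof -
    have "f u e = f u e'" if "u \<in> U" for u
      using invariant \<open>e \<in> E\<close> \<open>e' \<in> E\<close> that by blast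
    then have "(SUP u\<in>U. ereal \<bar>f u e - f u e'\<bar>) = (SUP u\<in>U. 0)"
      by (intro SUP_cong) simp_all
    then show ?thesis
      using \<open>U \<noteq> {}\<close> by simp
  qed
  then have "(\<lambda>(e, e'). SUP u\<in>U. ereal \<bar>f u e - f u e'\<bar>) ` (E \<times> E) = (\<lambda>_. 0) ` (E \<times> E)"
    by (intro image_cong) auto
  then show "sup_gap f U E = 0"
    unfolding sup_gap_def using \<open>E \<noteq> {}\<close> by (simp add: image_constant_conv)
qed

lemma mem_inv_set_iff:
  assumes "finite E" "E \<noteq> {}" "Fw \<noteq> {}"
  shows "Phi \<in> inv_set P Fw FPhi E \<longleftrightarrow> Phi \<in> FPhi \<and>
           (\<forall>u\<in>Fw. \<forall>e\<in>E. \<forall>e'\<in>E.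
              cross_mom P Phi u e = cross_mom P Phi u e' \<and> sq_mom P Phi u e = sq_mom P Phi u e')"
  unfolding inv_set_def disc_cross_eq_sup_gap disc_sq_eq_sup_gap sup_gap_eq_0_iff[OF assms]
  by blast

lemma inv_set_antimono:
  assumes "finite E" "E' \<subseteq> E" "E' \<noteq> {}" "Fw \<noteq> {}"
  shows "inv_set P Fw FPhi E \<subseteq> inv_set P Fw FPhi E'"
proof -
  have "finite E'" "E \<noteq> {}"
    using assms finite_subset by auto
  then show ?thesis
    using assms unfolding subset_iff mem_inv_set_iff[OF \<open>finite E\<close> \<open>E \<noteq> {}\<close> \<open>Fw \<noteq> {}\<close>]
      mem_inv_set_iff[OF \<open>finite E'\<close> \<open>E' \<noteq> {}\<close> \<open>Fw \<noteq> {}\<close>]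
    by blast
qed

lemma inv_set_eq_if_identifiable:
  assumes "finite E" "E' \<subseteq> E" "E' \<noteq> {}" "Fw \<noteq> {}"
    and ident: "\<And>Phi. Phi \<in> FPhi - inv_set P Fw FPhi E \<Longrightarrow>
                  disc_cross P Fw E' Phi > 0 \<or> disc_sq P Fw E' Phi > 0"
  shows "inv_set P Fw FPhi E' = inv_set P Fw FPhi E"
proof
  show "inv_set P Fw FPhi E' \<subseteq> inv_set P Fw FPhi E"
  proof
    fix Phi assume feasible: "Phi \<in> inv_set P Fw FPhi E'"
    show "Phi \<in> inv_set P Fw FPhi E"
    proof (rule ccontr)
      assume "Phi \<notin> inv_set P Fw FPhi E"
      with feasible have "Phi \<in> FPhi - inv_set P Fw FPhi E"
        by (simp add: inv_set_def)
      from ident[OF this] feasible show False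
        by (simp add: inv_set_def)
    qed
  qed
  show "inv_set P Fw FPhi E \<subseteq> inv_set P Fw FPhi E'"
    using inv_set_antimono[OF assms(1-4)] .
qed

lemma risk_eq_moments:
  assumes "integrable (P e) (\<lambda>z. (snd z)\<^sup>2)"
    and "integrable (P e) (\<lambda>z. w (Phi (fst z)) * snd z)"
    and "integrable (P e) (\<lambda>z. (w (Phi (fst z)))\<^sup>2)"
  shows "risk P e (w \<circ> Phi) =
           (\<integral>z. (snd z)\<^sup>2 \<partial>P e) - 2 * cross_mom P Phi w e + sq_mom P Phi w e"
proof -
  have "risk P e (w \<circ> Phi) =
          (\<integral>z. (snd z)\<^sup>2 - 2 * (w (Phi (fst z)) * snd z) + (w (Phi (fst z)))\<^sup>2 \<partial>P e)"
    unfolding risk_def by (intro Bochner_Integration.integral_cong) (simp_all add: power2_diff)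
  then show ?thesis
    unfolding cross_mom_def sq_mom_def using assms by simp
qed

lemma weighted_sum_shift:
  fixes g Y :: "'e \<Rightarrow> real"
  assumes "\<And>e. e \<in> E \<Longrightarrow> g e = Y e + k" and "(\<Sum>e\<in>E. a e) = 1"
  shows "(\<Sum>e\<in>E. a e * g e) = (\<Sum>e\<in>E. a e * Y e) + k"
proof -
  have "(\<Sum>e\<in>E. a e * g e) = (\<Sum>e\<in>E. a e * Y e) + (\<Sum>e\<in>E. a e) * k"
    using assms(1) by (simp add: distrib_left sum.distrib sum_distrib_right)
  then show ?thesis
    using assms(2) by simp
qed

lemma weighted_risk_eq_on_inv_set:
  assumes "finite Eall" "e0 \<in> Eall" "Fw \<noteq> {}"
    and "Phi \<in> inv_set P Fw FPhi Eall" "w \<in> Fw"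
    and "\<And>e. e \<in> Eall \<Longrightarrow> integrable (P e) (\<lambda>z. (snd z)\<^sup>2)"
    and "\<And>e. e \<in> Eall \<Longrightarrow> integrable (P e) (\<lambda>z. w (Phi (fst z)) * snd z)"
    and "\<And>e. e \<in> Eall \<Longrightarrow> integrable (P e) (\<lambda>z. (w (Phi (fst z)))\<^sup>2)"
    and "E \<subseteq> Eall" "(\<Sum>e\<in>E. a e) = 1"
  shows "(\<Sum>e\<in>E. a e * risk P e (w \<circ> Phi)) =
           (\<Sum>e\<in>E. a e * (\<integral>z. (snd z)\<^sup>2 \<partial>P e)) +
           (sq_mom P Phi w e0 - 2 * cross_mom P Phi w e0)"
proof (rule weighted_sum_shift)
  fix e assume "e \<in> E"
  then have "e \<in> Eall"
    using \<open>E \<subseteq> Eall\<close> by blast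
  have "Eall \<noteq> {}"
    using \<open>e0 \<in> Eall\<close> by blast
  then have "\<forall>u\<in>Fw. \<forall>e\<in>Eall. \<forall>e'\<in>Eall.
      cross_mom P Phi u e = cross_mom P Phi u e' \<and> sq_mom P Phi u e = sq_mom P Phi u e'"
    using assms(1,3,4) mem_inv_set_iff by blast
  then have "cross_mom P Phi w e = cross_mom P Phi w e0" "sq_mom P Phi w e = sq_mom P Phi w e0"
    using \<open>w \<in> Fw\<close> \<open>e \<in> Eall\<close> \<open>e0 \<in> Eall\<close> by blast+
  with risk_eq_moments[of P e w Phi] assms(6-8) \<open>e \<in> Eall\<close>
  show "risk P e (w \<circ> Phi) =
          (\<integral>z. (snd z)\<^sup>2 \<partial>P e) + (sq_mom P Phi w e0 - 2 * cross_mom P Phi w e0)"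
    by simp
qed (use assms in blast)

lemma sum_train_weight:
  assumes "finite E" "E \<noteq> {}" "\<And>e. e \<in> E \<Longrightarrow> n e > 0"
  shows "(\<Sum>e\<in>E. train_weight n E e) = 1"
proof -
  have "(\<Sum>e\<in>E. n e) > 0"
    using assms by (intro sum_pos)
  then show ?thesis
    unfolding train_weight_def sum_divide_distrib[symmetric] of_nat_sum[symmetric]
    by (simp del: of_nat_sum)
qed

lemma wargmin_eq_if_objectives_differ_by_const:
  assumes "\<And>w Phi. w \<in> Fw \<Longrightarrow> Phi \<in> Feas \<Longrightarrow>
             (\<Sum>e\<in>E. a e * risk P e (w \<circ> Phi)) - (\<Sum>e\<in>E'. b e * risk P e (w \<circ> Phi)) = c"
  shows "wargmin P Fw Feas E a = wargmin P Fw Feas E' b"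
proof -
  have "(\<Sum>e\<in>E. a e * risk P e (w \<circ> Phi)) \<le> (\<Sum>e\<in>E. a e * risk P e (w' \<circ> Phi')) \<longleftrightarrow>
        (\<Sum>e\<in>E'. b e * risk P e (w \<circ> Phi)) \<le> (\<Sum>e\<in>E'. b e * risk P e (w' \<circ> Phi'))"
    if "w \<in> Fw" "Phi \<in> Feas" "w' \<in> Fw" "Phi' \<in> Feas" for w Phi w' Phi'
    using assms[OF that(1,2)] assms[OF that(3,4)] by linarith
  then show ?thesis
    unfolding wargmin_def by blast
qed

theorem proposition2:
  fixes P :: "'e \<Rightarrow> ((real^'p) \<times> real) measure"
    and Eall Etr :: "'e set"
    and astar :: "'e \<Rightarrow> real"
    and n :: "'e \<Rightarrow> nat"
    and FPhi :: "(real^'p \<Rightarrow> 'h) set"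
    and Fw :: "('h \<Rightarrow> real) set"
  assumes fin: "finite Eall"
    and sub: "Etr \<subseteq> Eall"
    and Etr_ne: "Etr \<noteq> {}"
    and Fw_ne: "Fw \<noteq> {}"
    and prob: "\<And>e. e \<in> Eall \<Longrightarrow> prob_space (P e)"
    and astar_pos: "\<And>e. e \<in> Eall \<Longrightarrow> astar e > 0"
    and astar_sum: "(\<Sum>e\<in>Eall. astar e) = 1"
    and n_pos: "\<And>e. e \<in> Etr \<Longrightarrow> n e > 0"
    and int_y2: "\<And>e. e \<in> Eall \<Longrightarrow> integrable (P e) (\<lambda>z. (snd z)\<^sup>2)"
    and int_uy: "\<And>e Phi u. e \<in> Eall \<Longrightarrow> Phi \<in> FPhi \<Longrightarrow> u \<in> Fw \<Longrightarrow>
                   integrable (P e) (\<lambda>z. u (Phi (fst z)) * snd z)"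
    and int_u2: "\<And>e Phi u. e \<in> Eall \<Longrightarrow> Phi \<in> FPhi \<Longrightarrow> u \<in> Fw \<Longrightarrow>
                   integrable (P e) (\<lambda>z. (u (Phi (fst z)))\<^sup>2)"
    and ident: "\<And>Phi. Phi \<in> FPhi - inv_set P Fw FPhi Eall \<Longrightarrow>
                   disc_cross P Fw Etr Phi > 0 \<or> disc_sq P Fw Etr Phi > 0"
  shows "inv_set P Fw FPhi Etr = inv_set P Fw FPhi Eall \<and>
         (inv_set P Fw FPhi Eall \<noteq> {} \<longrightarrow>
            wargmin P Fw (inv_set P Fw FPhi Etr) Etr (train_weight n Etr)
              = wargmin P Fw (inv_set P Fw FPhi Eall) Eall astar)"
proof -
  let ?I = "inv_set P Fw FPhi Eall"
  let ?Y = "\<lambda>e. \<integral>z. (snd z)\<^sup>2 \<partial>P e"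
  have feasible: "inv_set P Fw FPhi Etr = ?I"
    using inv_set_eq_if_identifiable[OF fin sub Etr_ne Fw_ne ident] .
  obtain e0 where "e0 \<in> Eall"
    using Etr_ne sub by blast
  have weights: "(\<Sum>e\<in>Etr. train_weight n Etr e) = 1"
    using fin sub Etr_ne n_pos by (intro sum_train_weight) (auto intro: finite_subset)
  have "(\<Sum>e\<in>Etr. train_weight n Etr e * risk P e (w \<circ> Phi)) -
          (\<Sum>e\<in>Eall. astar e * risk P e (w \<circ> Phi)) =
        (\<Sum>e\<in>Etr. train_weight n Etr e * ?Y e) - (\<Sum>e\<in>Eall. astar e * ?Y e)"
    if "w \<in> Fw" "Phi \<in> ?I" for w Phi
  proof -
    have "Phi \<in> FPhi"
      using \<open>Phi \<in> ?I\<close> by (simp add: inv_set_def)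
    have weighted_risk: "(\<Sum>e\<in>E. a e * risk P e (w \<circ> Phi)) =
        (\<Sum>e\<in>E. a e * ?Y e) + (sq_mom P Phi w e0 - 2 * cross_mom P Phi w e0)"
      if "E \<subseteq> Eall" "(\<Sum>e\<in>E. a e) = 1" for E a
      using fin \<open>e0 \<in> Eall\<close> Fw_ne \<open>Phi \<in> ?I\<close> \<open>w \<in> Fw\<close> \<open>Phi \<in> FPhi\<close> that
      by (intro weighted_risk_eq_on_inv_set int_y2 int_uy int_u2) auto
    show ?thesis
      using weighted_risk[OF sub weights] weighted_risk[OF order_refl astar_sum] by simp
  qed
  then have "wargmin P Fw ?I Etr (train_weight n Etr) = wargmin P Fw ?I Eall astar"
    by (rule wargmin_eq_if_objectives_differ_by_const[where
          c = "(\<Sum>e\<in>Etr. train_weight n Etr e * ?Y e) - (\<Sum>e\<in>Eall. astar e * ?Y e)"])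
  then show ?thesis
    unfolding feasible by blast
qed

end
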